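(* Let $k\ge 3$ and let $\pi=\pi(1)\cdots\pi(k)$ be a permutation of $[k]$ with $\pi(k)=\pi(k-1)+1=\pi(k-2)+2$. Let $\widetilde\pi=\pi(1)\cdots\pi(k-2)\pi(k)\pi(k-1)$ be the pattern obtained by swapping the last two entries. Then $\{213,\pi\}$ and $\{213,\widetilde\pi\}$ are forest-Wilf equivalent: for every $n\ge 0$, the number of rooted labeled forests on $[n]$ avoiding both $213$ and $\pi$ equals the number of rooted labeled forests on $[n]$ avoiding both $213$ and $\widetilde\pi$.
   Context: A rooted labeled forest on $[n]$ is an unordered (non-planar) forest on $n$ vertices, each component having a distinguished root, whose vertices carry distinct labels from $[n]$; $u$ is an ancestor of $v$ if $u$ lies on the path from the root of $v$'s component to $v$. A pattern is a permutation $\pi$ of $[k]$. An instance of $\pi$ in a forest is a sequence of vertices $v_1,\dots,v_k$ with $v_i$ a strict ancestor of $v_{i+1}$ for all $i$ and whose labels are in the same relative order as $\pi(1),\dots,\pi(k)$. A forest avoids a set of patterns if it contains no instance of any of them. *)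

theory Defs
  imports Main
begin

text \<open>A rooted labeled forest on [n] = {1..n} is encoded by its parent function
  f :: nat => nat: f v is the parent of vertex v, with f v = 0 meaning that v is a
  root. Outside {1..n} the function is 0 (canonical encoding). Acyclicity: following
  parents from any vertex eventually reaches 0. This is a bijection with rooted
  labeled forests on [n].\<close>

definition forest :: "nat \<Rightarrow> (nat \<Rightarrow> nat) \<Rightarrow> bool" where
  "forest n f \<longleftrightarrow>
     (\<forall>v. v \<notin> {1..n} \<longrightarrow> f v = 0) \<and>
     (\<forall>v \<in> {1..n}. f v \<le> n) \<and>
     (\<forall>v \<in> {1..n}. \<exists>j. (f ^^ j) v = 0)"

definition strict_anc :: "(nat \<Rightarrow> nat) \<Rightarrow> nat \<Rightarrow> nat \<Rightarrow> bool" where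
  "strict_anc f u v \<longleftrightarrow> u \<noteq> 0 \<and> (\<exists>j\<ge>1. (f ^^ j) v = u)"

definition is_perm :: "nat list \<Rightarrow> bool" where
  "is_perm p \<longleftrightarrow> distinct p \<and> set p = {1..length p}"

definition contains :: "nat \<Rightarrow> (nat \<Rightarrow> nat) \<Rightarrow> nat list \<Rightarrow> bool" where
  "contains n f p \<longleftrightarrow> (\<exists>vs. length vs = length p \<and> set vs \<subseteq> {1..n} \<and>
      (\<forall>i. Suc i < length vs \<longrightarrow> strict_anc f (vs ! i) (vs ! Suc i)) \<and>
      (\<forall>i < length p. \<forall>j < length p. vs ! i < vs ! j \<longleftrightarrow> p ! i < p ! j))"

definition avoids :: "nat \<Rightarrow> (nat \<Rightarrow> nat) \<Rightarrow> nat list set \<Rightarrow> bool" where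
  "avoids n f P \<longleftrightarrow> (\<forall>p \<in> P. \<not> contains n f p)"

definition num_avoiders :: "nat \<Rightarrow> nat list set \<Rightarrow> nat" where
  "num_avoiders n P = card {f. forest n f \<and> avoids n f P}"

end

theory Submission
  imports Defs
begin

text \<open>Write \<pi> = r p1 p2, where p1 < p2 are the two values just above the last entry of r,
  so that the swapped pattern is r p2 p1. In a forest avoiding 213, let X be the set of vertices
  ending an occurrence of r, B x the set of descendants of x with a larger label, U the union of
  the B x over x \<in> X, and T = X - U the set of tops. Avoiding 213 makes the blocks B t, t \<in> T,
  a partition of U, and an occurrence of r p1 p2 (of r p2 p1) amounts to two vertices y above z in
  one block with y < z (with y > z). Hence avoiding \<pi> means that labels decrease downwards in
  every block, and reversing the order of the labels inside each block yields a forest avoiding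
  213 and the swapped pattern. The reversal creates no 213 and changes neither X nor the blocks:
  every x \<in> X ends an occurrence of r whose other vertices are not covered, which is shown by
  splicing occurrences, and such occurrences are not affected. Reversing twice gives back the
  forest, so this is a bijection between the two sets of avoiders.\<close>

section \<open>Ancestry in forests\<close>

lemma funpow_fixed_point: "f x = x \<Longrightarrow> (f ^^ j) x = x"
  by (induction j) simp_all

lemma forest_zero: "forest n f \<Longrightarrow> f 0 = 0"
  unfolding forest_def by auto

lemma forest_funpow_le:
  assumes "forest n f" "v \<le> n"
  shows "(f ^^ j) v \<le> n"
proof (induction j)
  case (Suc j)
  have "f ((f ^^ j) v) \<le> n"
  proof (cases "(f ^^ j) v = 0")
    case True
    then show ?thesis using forest_zero[OF assms(1)] by simp
  next
    case False
    then show ?thesis using Suc assms(1) unfolding forest_def by simp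
  qed
  then show ?case by simp
qed (use assms in simp)

lemma strict_anc_in_vertices:
  assumes "forest n f" "strict_anc f u v"
  shows "u \<in> {1..n}" "v \<in> {1..n}"
proof -
  obtain j where j: "j \<ge> 1" "(f ^^ j) v = u" "u \<noteq> 0"
    using assms(2) unfolding strict_anc_def by auto
  show "v \<in> {1..n}"
  proof (rule ccontr)
    assume "v \<notin> {1..n}"
    then have "f v = 0"
      using assms(1) unfolding forest_def by auto
    moreover have "(f ^^ j) v = (f ^^ (j - 1)) (f v)"
      using j(1) by (metis Suc_diff_le comp_apply diff_Suc_1 funpow_Suc_right)
    ultimately show False
      using j funpow_fixed_point[of f 0] forest_zero[OF assms(1)] by simp
  qed
  then have "u \<le> n"
    using forest_funpow_le[OF assms(1)] j by auto
  then show "u \<in> {1..n}"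
    using j(3) by simp
qed

lemma strict_anc_trans:
  assumes "strict_anc f u v" "strict_anc f v w"
  shows "strict_anc f u w"
proof -
  obtain i where "i \<ge> 1" "(f ^^ i) v = u" "u \<noteq> 0"
    using assms(1) unfolding strict_anc_def by auto
  moreover obtain j where "j \<ge> 1" "(f ^^ j) w = v"
    using assms(2) unfolding strict_anc_def by auto
  ultimately have "(f ^^ (i + j)) w = u" "i + j \<ge> 1" "u \<noteq> 0"
    by (simp_all add: funpow_add)
  then show ?thesis
    unfolding strict_anc_def by blast
qed

lemma strict_anc_irrefl:
  assumes "forest n f"
  shows "\<not> strict_anc f v v"
proof
  assume anc: "strict_anc f v v"
  then have v: "v \<in> {1..n}"
    using strict_anc_in_vertices[OF assms] by auto
  obtain j where j: "j \<ge> 1" "(f ^^ j) v = v"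
    using anc unfolding strict_anc_def by auto
  obtain m where m: "(f ^^ m) v = 0"
    using assms v unfolding forest_def by blast
  \<comment> \<open>a cycle through v would have to pass through the root marker 0, which is fixed\<close>
  have "(f ^^ (j * m)) v = v"
    using funpow_fixed_point[of "f ^^ j" v] j(2) by (simp add: funpow_mult)
  moreover have "m \<le> j * m"
    using j(1) by simp
  then have "(f ^^ (j * m)) v = (f ^^ (j * m - m)) ((f ^^ m) v)"
    by (metis comp_apply funpow_add le_add_diff_inverse2)
  ultimately have "v = 0"
    using m funpow_fixed_point[of f 0] forest_zero[OF assms] by simp
  then show False
    using v by simp
qed

lemma strict_anc_neq: "forest n f \<Longrightarrow> strict_anc f u v \<Longrightarrow> u \<noteq> v"
  using strict_anc_irrefl by blast

lemma strict_anc_linear: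
  assumes "strict_anc f u w" "strict_anc f v w"
  shows "u = v \<or> strict_anc f u v \<or> strict_anc f v u"
proof -
  obtain i where i: "i \<ge> 1" "(f ^^ i) w = u" "u \<noteq> 0"
    using assms(1) unfolding strict_anc_def by auto
  obtain j where j: "j \<ge> 1" "(f ^^ j) w = v" "v \<noteq> 0"
    using assms(2) unfolding strict_anc_def by auto
  have step: "strict_anc f y x"
    if "k < l" "(f ^^ k) w = x" "(f ^^ l) w = y" "y \<noteq> 0" for k l x y
  proof -
    have "(f ^^ (l - k)) x = y"
      using that by (metis funpow_add le_add_diff_inverse2 less_imp_le_nat comp_apply)
    then show ?thesis
      unfolding strict_anc_def using that by (intro conjI exI[of _ "l - k"]) auto
  qed
  consider "i = j" | "i < j" | "j < i" by arith
  then show ?thesis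
  proof cases
    case 2
    then show ?thesis using step[OF 2 i(2) j(2,3)] by blast
  next
    case 3
    then show ?thesis using step[OF 3 j(2) i(2,3)] by blast
  qed (use i j in simp)
qed

definition depth :: "(nat \<Rightarrow> nat) \<Rightarrow> nat \<Rightarrow> nat" where
  "depth f v = card {u. strict_anc f u v}"

lemma depth_less:
  assumes "forest n f" "strict_anc f u v"
  shows "depth f u < depth f v"
proof -
  have "finite {x. strict_anc f x v}"
    by (rule finite_subset[of _ "{1..n}"]) (use strict_anc_in_vertices[OF assms(1)] in auto)
  moreover have "{x. strict_anc f x u} \<subset> {x. strict_anc f x v}"
    using strict_anc_trans[OF _ assms(2)] assms(2) strict_anc_irrefl[OF assms(1), of u] by auto
  ultimately show ?thesis
    unfolding depth_def by (rule psubset_card_mono)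
qed

lemma strict_anc_induct:
  assumes "forest n f" "\<And>v. (\<And>u. strict_anc f u v \<Longrightarrow> P u) \<Longrightarrow> P v"
  shows "P v"
proof (induction "depth f v" arbitrary: v rule: less_induct)
  case less
  then show ?case using assms depth_less by blast
qed

lemma strict_anc_chain:
  assumes "\<And>i. Suc i < m \<Longrightarrow> strict_anc f (g i) (g (Suc i))" "i < j" "j < m"
  shows "strict_anc f (g i) (g j)"
  using assms(2,3)
proof (induction j)
  case (Suc j)
  then show ?case
    using assms(1) strict_anc_trans by (cases "i = j") auto
qed simp

section \<open>Occurrences of patterns\<close>

text \<open>Labels are compared through lam, so that a relabelled forest can be studied by changing lam
  instead of the forest.\<close>
definition occurrence ::
    "nat \<Rightarrow> (nat \<Rightarrow> nat) \<Rightarrow> (nat \<Rightarrow> nat) \<Rightarrow> nat list \<Rightarrow> (nat \<Rightarrow> nat) \<Rightarrow> bool" where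
  "occurrence n f lam p g \<longleftrightarrow> (\<forall>i<length p. g i \<in> {1..n}) \<and>
     (\<forall>i j. i < j \<longrightarrow> j < length p \<longrightarrow> strict_anc f (g i) (g j)) \<and>
     (\<forall>i<length p. \<forall>j<length p. lam (g i) < lam (g j) \<longleftrightarrow> p ! i < p ! j)"

lemma occurrence_vertex: "occurrence n f lam p g \<Longrightarrow> i < length p \<Longrightarrow> g i \<in> {1..n}"
  unfolding occurrence_def by blast

lemma occurrence_anc:
  "occurrence n f lam p g \<Longrightarrow> i < j \<Longrightarrow> j < length p \<Longrightarrow> strict_anc f (g i) (g j)"
  unfolding occurrence_def by blast

lemma occurrence_less_iff:
  "occurrence n f lam p g \<Longrightarrow> i < length p \<Longrightarrow> j < length p \<Longrightarrow>
    lam (g i) < lam (g j) \<longleftrightarrow> p ! i < p ! j"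
  unfolding occurrence_def by blast

lemma contains_iff_occurrence: "contains n f p \<longleftrightarrow> (\<exists>g. occurrence n f id p g)"
proof
  assume "contains n f p"
  then obtain vs where vs: "length vs = length p" "set vs \<subseteq> {1..n}"
    "\<forall>i. Suc i < length vs \<longrightarrow> strict_anc f (vs ! i) (vs ! Suc i)"
    "\<forall>i < length p. \<forall>j < length p. vs ! i < vs ! j \<longleftrightarrow> p ! i < p ! j"
    unfolding contains_def by blast
  moreover have "\<forall>i<length p. vs ! i \<in> {1..n}"
    using vs(1,2) nth_mem by (metis subsetD)
  ultimately have "occurrence n f id p ((!) vs)"
    unfolding occurrence_def using strict_anc_chain[of "length vs" f "(!) vs"] by auto
  then show "\<exists>g. occurrence n f id p g" by blast
next
  assume "\<exists>g. occurrence n f id p g"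
  then obtain g where "occurrence n f id p g" ..
  then show "contains n f p"
    unfolding contains_def occurrence_def by (intro exI[of _ "map g [0..<length p]"]) auto
qed

definition concordant :: "nat \<Rightarrow> nat \<Rightarrow> nat \<Rightarrow> nat \<Rightarrow> bool" where
  "concordant x y u v \<longleftrightarrow> (x < y \<and> u < v) \<or> (y < x \<and> v < u)"

lemma occurrenceI:
  assumes "\<And>i. i < length p \<Longrightarrow> g i \<in> {1..n}"
    and "\<And>i j. i < j \<Longrightarrow> j < length p \<Longrightarrow> strict_anc f (g i) (g j)"
    and "\<And>i j. i < j \<Longrightarrow> j < length p \<Longrightarrow> concordant (p ! i) (p ! j) (lam (g i)) (lam (g j))"
  shows "occurrence n f lam p g"
  unfolding occurrence_def
proof (intro conjI allI impI)
  fix i j assume ij: "i < length p" "j < length p"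
  consider "i < j" | "i = j" | "j < i" by arith
  then show "lam (g i) < lam (g j) \<longleftrightarrow> p ! i < p ! j"
  proof cases
    case 1
    then show ?thesis using assms(3)[OF 1 ij(2)] by (auto simp: concordant_def)
  next
    case 3
    then show ?thesis using assms(3)[OF 3 ij(1)] by (auto simp: concordant_def)
  qed simp
qed (use assms in auto)

lemma occurrence_concordant:
  assumes "occurrence n f lam p g" "i < length p" "j < length p" "lam (g i) \<noteq> lam (g j)"
  shows "concordant (p ! i) (p ! j) (lam (g i)) (lam (g j))"
  using occurrence_less_iff[OF assms(1,2,3)] occurrence_less_iff[OF assms(1,3,2)] assms(4)
  unfolding concordant_def by auto

lemma occurrence_relabel_iff:
  assumes "\<And>i j. i < j \<Longrightarrow> j < length p \<Longrightarrow> strict_anc f (g i) (g j) \<Longrightarrow>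
    (lam (g i) < lam (g j) \<longleftrightarrow> lam' (g i) < lam' (g j)) \<and>
    (lam (g j) < lam (g i) \<longleftrightarrow> lam' (g j) < lam' (g i))"
  shows "occurrence n f lam p g \<longleftrightarrow> occurrence n f lam' p g"
proof -
  have same_order: "lam (g i) < lam (g j) \<longleftrightarrow> lam' (g i) < lam' (g j)"
    if chain: "\<forall>i j. i < j \<longrightarrow> j < length p \<longrightarrow> strict_anc f (g i) (g j)"
      and "i < length p" "j < length p" for i j
  proof -
    consider "i < j" | "i = j" | "j < i"
      by arith
    then show ?thesis
      by cases (use assms chain that in auto)
  qed
  show ?thesis
    unfolding occurrence_def using same_order by blast
qed

lemma occurrence_append_prefix:
  assumes "occurrence n f lam (p @ q) g"
  shows "occurrence n f lam p g"
  using assms unfolding occurrence_def by (auto simp: nth_append)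

definition avoids_213 :: "(nat \<Rightarrow> nat) \<Rightarrow> (nat \<Rightarrow> nat) \<Rightarrow> bool" where
  "avoids_213 f lam \<longleftrightarrow>
    (\<forall>u v w. strict_anc f u v \<longrightarrow> strict_anc f v w \<longrightarrow> \<not> (lam v < lam u \<and> lam u < lam w))"

lemma contains_213_iff:
  assumes "forest n f"
  shows "contains n f [2,1,3] \<longleftrightarrow> \<not> avoids_213 f id"
proof
  assume "contains n f [2,1,3]"
  then obtain g where "occurrence n f id [2,1,3] g"
    using contains_iff_occurrence by blast
  then have "strict_anc f (g 0) (g 1)" "strict_anc f (g 1) (g 2)" "g 1 < g 0" "g 0 < g 2"
    unfolding occurrence_def by auto
  then show "\<not> avoids_213 f id"
    unfolding avoids_213_def by auto
next
  assume "\<not> avoids_213 f id"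
  then obtain u v w where uvw: "strict_anc f u v" "strict_anc f v w" "v < u" "u < w"
    unfolding avoids_213_def by auto
  have "occurrence n f id [2,1,3] ((!) [u, v, w])"
    unfolding occurrence_def
    using uvw strict_anc_in_vertices[OF assms uvw(1)] strict_anc_in_vertices[OF assms uvw(2)]
      strict_anc_trans[OF uvw(1,2)]
    by (auto simp: less_Suc_eq)
  then show "contains n f [2,1,3]"
    using contains_iff_occurrence by blast
qed

section \<open>Ends of occurrences and their blocks\<close>

definition occ_ends :: "nat \<Rightarrow> (nat \<Rightarrow> nat) \<Rightarrow> (nat \<Rightarrow> nat) \<Rightarrow> nat list \<Rightarrow> nat set" where
  "occ_ends n f lam r = {g (length r - 1) | g. occurrence n f lam r g}"

definition larger_desc :: "(nat \<Rightarrow> nat) \<Rightarrow> (nat \<Rightarrow> nat) \<Rightarrow> nat \<Rightarrow> nat set" where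
  "larger_desc f lam x = {v. strict_anc f x v \<and> lam x < lam v}"

definition covered :: "nat \<Rightarrow> (nat \<Rightarrow> nat) \<Rightarrow> (nat \<Rightarrow> nat) \<Rightarrow> nat list \<Rightarrow> nat set" where
  "covered n f lam r = (\<Union>x\<in>occ_ends n f lam r. larger_desc f lam x)"

definition tops :: "nat \<Rightarrow> (nat \<Rightarrow> nat) \<Rightarrow> (nat \<Rightarrow> nat) \<Rightarrow> nat list \<Rightarrow> nat set" where
  "tops n f lam r = occ_ends n f lam r - covered n f lam r"

locale forest_213 =
  fixes n :: nat and f lam :: "nat \<Rightarrow> nat" and r :: "nat list"
  assumes forest: "forest n f" and lam_inj: "inj_on lam {1..n}"
    and avoids: "avoids_213 f lam" and r_nonempty: "r \<noteq> []"
begin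

abbreviation "anc \<equiv> strict_anc f"
abbreviation "L \<equiv> length r"
abbreviation "X \<equiv> occ_ends n f lam r"
abbreviation "B \<equiv> larger_desc f lam"
abbreviation "U \<equiv> covered n f lam r"
abbreviation "T \<equiv> tops n f lam r"

lemma last_less_length: "L - 1 < L"
  using r_nonempty by simp

lemma label_neq: "anc u v \<Longrightarrow> lam u \<noteq> lam v"
  using strict_anc_in_vertices[OF forest] strict_anc_neq[OF forest] lam_inj
  by (metis inj_on_contraD)

lemma label_path_above: "anc x z \<Longrightarrow> anc z v \<Longrightarrow> lam x < lam v \<Longrightarrow> lam x < lam z"
  using avoids label_neq[of x z] unfolding avoids_213_def by (metis nat_neq_iff)

lemma label_path_below: "anc u v \<Longrightarrow> anc v w \<Longrightarrow> lam v < lam u \<Longrightarrow> lam w < lam u"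
  using label_path_above[of u v w] label_neq[of u w] strict_anc_trans[of f u v w] by fastforce

lemma larger_desc_anc: "v \<in> B x \<Longrightarrow> anc x v"
  unfolding larger_desc_def by simp

lemma larger_desc_less: "v \<in> B x \<Longrightarrow> lam x < lam v"
  unfolding larger_desc_def by simp

lemma larger_desc_trans: "y \<in> B x \<Longrightarrow> v \<in> B y \<Longrightarrow> v \<in> B x"
  unfolding larger_desc_def using strict_anc_trans by auto

lemma occurrence_pair:
  assumes "occurrence n f lam r g" "i < j" "j < L"
  shows "anc (g i) (g j) \<and> concordant (r ! i) (r ! j) (lam (g i)) (lam (g j))"
proof
  show anc: "anc (g i) (g j)"
    using occurrence_anc[OF assms] .
  show "concordant (r ! i) (r ! j) (lam (g i)) (lam (g j))"
    using occurrence_concordant[OF assms(1) _ assms(3) label_neq[OF anc]] assms(2,3) by simp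
qed

lemma pattern_neq:
  assumes "occurrence n f lam r g" "i < L" "j < L" "i \<noteq> j"
  shows "r ! i \<noteq> r ! j"
proof (cases "i < j")
  case True
  then show ?thesis using occurrence_pair[OF assms(1) True assms(3)] by (auto simp: concordant_def)
next
  case False
  then have "j < i" using assms(4) by simp
  then show ?thesis using occurrence_pair[OF assms(1) \<open>j < i\<close> assms(2)] by (auto simp: concordant_def)
qed

lemma pattern_no_213:
  assumes "occurrence n f lam r g" "p < q" "q < s" "s < L"
  shows "\<not> (r ! q < r ! p \<and> r ! p < r ! s)"
proof
  assume "r ! q < r ! p \<and> r ! p < r ! s"
  then have "lam (g q) < lam (g p)" "lam (g p) < lam (g s)"
    using occurrence_less_iff[OF assms(1)] assms by auto
  moreover have "anc (g p) (g q)" "anc (g q) (g s)"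
    using occurrence_anc[OF assms(1)] assms by auto
  ultimately show False
    using avoids unfolding avoids_213_def by blast
qed

lemma pattern_low_entry:
  assumes "occurrence n f lam r g" "p < q" "q < L" "r ! p < r ! (L - 1)"
  shows "r ! p < r ! q"
proof (cases "q = L - 1")
  case False
  then have "\<not> (r ! q < r ! p \<and> r ! p < r ! (L - 1))"
    using pattern_no_213[OF assms(1,2), of "L - 1"] assms(3) by simp
  then show ?thesis
    using assms pattern_neq[OF assms(1), of p q] by auto
qed (use assms in simp)

lemma occ_endsI: "occurrence n f lam r g \<Longrightarrow> g (L - 1) \<in> X"
  unfolding occ_ends_def by blast

lemma occ_endsE:
  assumes "x \<in> X"
  obtains g where "occurrence n f lam r g" "g (L - 1) = x"
  using assms unfolding occ_ends_def by blast

lemma larger_desc_same_side: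
  assumes g: "occurrence n f lam r g" and i: "i < L - 1" and v: "v \<in> B (g (L - 1))"
  shows "lam (g i) < lam v \<longleftrightarrow> lam (g i) < lam (g (L - 1))"
    and "lam v < lam (g i) \<longleftrightarrow> lam (g (L - 1)) < lam (g i)"
proof -
  have anc_last: "anc (g i) (g (L - 1))"
    using occurrence_anc[OF g i] last_less_length by simp
  have "lam (g (L - 1)) < lam v"
    using larger_desc_less[OF v] .
  moreover have "lam (g (L - 1)) < lam (g i) \<Longrightarrow> lam v < lam (g i)"
    using label_path_below[OF anc_last larger_desc_anc[OF v]] .
  moreover have "lam (g i) \<noteq> lam (g (L - 1))"
    using label_neq[OF anc_last] .
  ultimately show "lam (g i) < lam v \<longleftrightarrow> lam (g i) < lam (g (L - 1))"
    and "lam v < lam (g i) \<longleftrightarrow> lam (g (L - 1)) < lam (g i)"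
    by (meson less_asym nat_neq_iff order.strict_trans)+
qed

lemma occurrence_replace_last:
  assumes g: "occurrence n f lam r g" and v: "v \<in> B (g (L - 1))"
  shows "occurrence n f lam r (g(L - 1 := v))"
  unfolding occurrence_def
proof (intro conjI allI impI)
  fix i assume "i < L"
  then show "(g(L - 1 := v)) i \<in> {1..n}"
    using occurrence_vertex[OF g] strict_anc_in_vertices(2)[OF forest larger_desc_anc[OF v]] by auto
next
  fix i j assume "i < j" "j < L"
  then show "anc ((g(L - 1 := v)) i) ((g(L - 1 := v)) j)"
    using occurrence_anc[OF g] strict_anc_trans[OF _ larger_desc_anc[OF v]] by auto
next
  fix i j assume ij: "i < L" "j < L"
  then show "lam ((g(L - 1 := v)) i) < lam ((g(L - 1 := v)) j) \<longleftrightarrow> r ! i < r ! j"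
    using occurrence_less_iff[OF g ij] larger_desc_same_side[OF g _ v, of i]
      larger_desc_same_side[OF g _ v, of j]
    by (cases "i = L - 1"; cases "j = L - 1") auto
qed

lemma larger_desc_in_ends: "x \<in> X \<Longrightarrow> v \<in> B x \<Longrightarrow> v \<in> X"
  by (metis occ_endsE occ_endsI occurrence_replace_last fun_upd_same)

lemma covered_subset_ends: "U \<subseteq> X"
  unfolding covered_def using larger_desc_in_ends by auto

lemma tops_subset_ends: "T \<subseteq> X"
  unfolding tops_def by auto

lemma larger_desc_covered: "t \<in> T \<Longrightarrow> B t \<subseteq> U"
  unfolding covered_def tops_def by auto

lemma covered_in_top_block:
  assumes "v \<in> U"
  obtains t where "t \<in> T" "v \<in> B t"
proof -
  obtain y0 where "y0 \<in> X" "v \<in> B y0"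
    using assms unfolding covered_def by auto
  \<comment> \<open>the highest x with v \<in> B x is a top\<close>
  then obtain y where y: "y \<in> X" "v \<in> B y"
    and min: "\<And>y'. y' \<in> X \<and> v \<in> B y' \<Longrightarrow> depth f y \<le> depth f y'"
    using ex_has_least_nat[of "\<lambda>y. y \<in> X \<and> v \<in> B y" y0 "depth f"] by blast
  have "y \<notin> U"
  proof
    assume "y \<in> U"
    then obtain y' where "y' \<in> X" "y \<in> B y'"
      unfolding covered_def by auto
    then show False
      using min[of y'] larger_desc_trans[of y y' v] y(2)
        depth_less[OF forest larger_desc_anc[of y y']] by auto
  qed
  then show thesis
    using that y unfolding tops_def by blast
qed

lemma top_block_unique:
  assumes "t \<in> T" "t' \<in> T" "v \<in> B t" "v \<in> B t'"
  shows "t = t'"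
proof (rule ccontr)
  assume "t \<noteq> t'"
  then have "anc t t' \<or> anc t' t"
    using strict_anc_linear larger_desc_anc assms(3,4) by blast
  moreover have False if "anc s s'" "s \<in> T" "s' \<in> T" "v \<in> B s" "v \<in> B s'" for s s'
  proof -
    have "lam s < lam s'"
      using label_path_above[OF that(1) larger_desc_anc[OF that(5)] larger_desc_less[OF that(4)]] .
    then have "s' \<in> U"
      using that(1,2) tops_subset_ends unfolding covered_def larger_desc_def by auto
    then show False
      using that(3) unfolding tops_def by simp
  qed
  ultimately show False
    using assms by blast
qed

lemma strict_anc_by_label:
  assumes "anc u x" "anc v x" "lam u < lam v" "lam v < lam x"
  shows "anc u v"
proof -
  have "u = v \<or> anc u v \<or> anc v u"
    using strict_anc_linear[OF assms(1,2)] .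
  moreover have "\<not> anc v u"
    using label_path_above[OF _ assms(1,4)] assms(3) by fastforce
  ultimately show ?thesis
    using assms(3) by blast
qed

lemma larger_desc_path_closed:
  assumes "u \<in> B x" "anc u v" "anc v w" "w \<in> B x"
  shows "v \<in> B x"
proof -
  have "anc x v"
    using strict_anc_trans[OF larger_desc_anc[OF assms(1)] assms(2)] .
  then show ?thesis
    using label_path_above[OF _ assms(3) larger_desc_less[OF assms(4)]] unfolding larger_desc_def by simp
qed

lemma larger_desc_exit_below:
  assumes "v \<in> B x" "anc v w" "w \<notin> B x"
  shows "lam w < lam x"
proof -
  have "anc x w"
    using strict_anc_trans[OF larger_desc_anc[OF assms(1)] assms(2)] .
  then show ?thesis
    using assms(3) label_neq[OF \<open>anc x w\<close>] unfolding larger_desc_def by auto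
qed

definition covered_count :: "(nat \<Rightarrow> nat) \<Rightarrow> nat" where
  "covered_count g = card {i. i < L - 1 \<and> g i \<in> U}"

lemma covered_count_less:
  assumes "\<And>i. i < L - 1 \<Longrightarrow> g' i = g i \<or> g' i = J i" and "\<And>i. i < L - 1 \<Longrightarrow> J i \<notin> U"
    and "i0 < L - 1" "g i0 \<in> U" "g' i0 = J i0"
  shows "covered_count g' < covered_count g"
proof -
  let ?C = "{i. i < L - 1 \<and> g i \<in> U}"
  have "{i. i < L - 1 \<and> g' i \<in> U} \<subseteq> ?C - {i0}"
    using assms by fastforce
  then have "card {i. i < L - 1 \<and> g' i \<in> U} \<le> card (?C - {i0})"
    by (intro card_mono) auto
  also have "\<dots> < card ?C"
    using assms(3,4) by (intro card_Diff1_less) auto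
  finally show ?thesis
    unfolding covered_count_def .
qed

end

section \<open>Splicing occurrences\<close>

text \<open>The splicing step: g ends at w and has a covered vertex g i0 in the block of the top t, and J
  ends at t. Positions lo to hi of g, a stretch containing i0, are replaced by those of J.\<close>
locale splice = forest_213 +
  fixes g J :: "nat \<Rightarrow> nat" and w t i0 :: nat
  assumes g_occ: "occurrence n f lam r g" and g_last: "g (length r - 1) = w"
    and J_occ: "occurrence n f lam r J" and J_last: "J (length r - 1) = t"
    and i0: "i0 < length r - 1" "g i0 \<in> larger_desc f lam t"
    and t_anc_w: "strict_anc f t w" and w_notin: "w \<notin> larger_desc f lam t"
begin

definition pivot :: nat where
  "pivot = r ! (L - 1)"

definition first_in_block :: nat where
  "first_in_block = (LEAST i. i < L - 1 \<and> g i \<in> B t)"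

definition next_low :: nat where
  "next_low = (LEAST p. first_in_block < p \<and> p < L \<and> (r ! p < pivot \<or> p = L - 1))"

definition hi :: nat where
  "hi = next_low - 1"

definition splice_from_start :: bool where
  "splice_from_start \<longleftrightarrow> (\<forall>p<first_in_block. r ! p < pivot \<longrightarrow> lam (J p) < lam w)"

definition last_low :: nat where
  "last_low = Max {p. p < first_in_block \<and> r ! p < pivot}"

definition lo :: nat where
  "lo = (if splice_from_start then 0 else Suc last_low)"

definition spliced :: "nat \<Rightarrow> nat" where
  "spliced i = (if lo \<le> i \<and> i \<le> hi then J i else g i)"

lemma w_below_t: "lam w < lam t"
  using t_anc_w w_notin label_neq[OF t_anc_w] unfolding larger_desc_def by auto

lemma first_in_block: "first_in_block < L - 1" "g first_in_block \<in> B t" "first_in_block \<le> i0"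
  using LeastI[of "\<lambda>i. i < L - 1 \<and> g i \<in> B t" i0] Least_le[of "\<lambda>i. i < L - 1 \<and> g i \<in> B t" i0] i0
  unfolding first_in_block_def by auto

lemma next_low: "first_in_block < next_low" "next_low < L" "r ! next_low < pivot \<or> next_low = L - 1"
  using LeastI[of "\<lambda>p. first_in_block < p \<and> p < L \<and> (r ! p < pivot \<or> p = L - 1)" "L - 1"]
    first_in_block(1) last_less_length
  unfolding next_low_def by auto

lemma not_low_before_next_low: "first_in_block < p \<Longrightarrow> p < next_low \<Longrightarrow> \<not> r ! p < pivot"
  using not_less_Least[of p "\<lambda>p. first_in_block < p \<and> p < L \<and> (r ! p < pivot \<or> p = L - 1)"] next_low(2)
  unfolding next_low_def by auto

lemma hi: "first_in_block \<le> hi" "Suc hi = next_low" "hi < L - 1"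
  using next_low first_in_block unfolding hi_def by auto

lemma pattern_neq_pivot: "p < L - 1 \<Longrightarrow> r ! p \<noteq> pivot"
  using pattern_neq[OF g_occ, of p "L - 1"] unfolding pivot_def by auto

lemma pivot_less_first: "pivot < r ! first_in_block"
proof -
  have "lam (g (L - 1)) < lam (g first_in_block)"
    using g_last w_below_t larger_desc_less[OF first_in_block(2)] by simp
  then show ?thesis
    using occurrence_less_iff[OF g_occ, of "L - 1" first_in_block] first_in_block(1)
    unfolding pivot_def by auto
qed

lemma after_hi_below_t:
  assumes "hi < q" "q < L"
  shows "anc t (g q)" "lam (g q) < lam t"
proof -
  have t_anc: "anc t (g p)" if "first_in_block < p" "p < L" for p
    using strict_anc_trans[OF larger_desc_anc[OF first_in_block(2)] occurrence_anc[OF g_occ that]] .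
  then show "anc t (g q)"
    using assms hi(1,2) by simp
  have "lam (g next_low) \<le> lam w"
  proof (cases "next_low = L - 1")
    case False
    then have "r ! next_low < r ! (L - 1)"
      using next_low(3) unfolding pivot_def by simp
    then show ?thesis
      using occurrence_less_iff[OF g_occ next_low(2) last_less_length] g_last by simp
  qed (use g_last in simp)
  then have low: "lam (g next_low) < lam t"
    using w_below_t by simp
  show "lam (g q) < lam t"
  proof (cases "q = next_low")
    case False
    then have "next_low < q"
      using assms hi(2) by simp
    then have "anc (g next_low) (g q)"
      using occurrence_anc[OF g_occ _ assms(2)] by simp
    then show ?thesis
      using label_path_above[OF t_anc[OF next_low(1,2)]] label_neq[OF \<open>anc t (g q)\<close>] low
      by (meson nat_neq_iff less_asym)
  qed (use low in simp)
qed

lemma i0_le_hi: "i0 \<le> hi"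
  using after_hi_below_t(2)[of i0] larger_desc_less[OF i0(2)] i0(1) by force

lemma J_anc_t: "p < L - 1 \<Longrightarrow> anc (J p) t"
  using occurrence_anc[OF J_occ, of p "L - 1"] J_last last_less_length by simp

lemma J_above_t_iff: "p < L - 1 \<Longrightarrow> lam t < lam (J p) \<longleftrightarrow> pivot < r ! p"
  using occurrence_less_iff[OF J_occ, of "L - 1" p] J_last last_less_length unfolding pivot_def by simp

lemma after_hi_smaller:
  assumes "pivot < r ! p" "p \<le> hi" "hi < q" "q < L"
  shows "r ! q < r ! p"
proof (cases "q = next_low")
  case True
  then show ?thesis
    using next_low(3) assms(1) unfolding pivot_def by auto
next
  case False
  then have q: "next_low < q"
    using assms(3) hi(2) by simp
  then have "r ! next_low < pivot"
    using next_low(3) assms(4) by auto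
  moreover have "\<not> (r ! next_low < r ! p \<and> r ! p < r ! q)"
    using pattern_no_213[OF g_occ _ q assms(4), of p] assms(2) hi(2) by simp
  moreover have "r ! p \<noteq> r ! q"
    using pattern_neq[OF g_occ, of p q] assms hi by simp
  ultimately show ?thesis
    using assms(1) by simp
qed

lemma low_before_first: "p \<le> hi \<Longrightarrow> r ! p < pivot \<Longrightarrow> p < first_in_block"
  using pivot_less_first not_low_before_next_low[of p] hi(2)
  by (metis Suc_le_lessD le_eq_less_or_eq linorder_neqE_nat not_less_iff_gr_or_eq)

lemma last_low:
  assumes "\<not> splice_from_start"
  shows "last_low < first_in_block" "r ! last_low < pivot" "lam w < lam (J last_low)"
proof -
  let ?S = "{p. p < first_in_block \<and> r ! p < pivot}"
  obtain p0 where p0: "p0 < first_in_block" "r ! p0 < pivot" "\<not> lam (J p0) < lam w"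
    using assms unfolding splice_from_start_def by auto
  have fin: "finite ?S"
    by simp
  have "p0 \<in> ?S"
    using p0 by simp
  then have ll: "last_low \<in> ?S" "p0 \<le> last_low"
    unfolding last_low_def using Max_in[OF fin] Max_ge[OF fin] by blast+
  then show "last_low < first_in_block" "r ! last_low < pivot"
    by auto
  have p0_L: "p0 < L - 1" "p0 < L"
    using p0(1) first_in_block(1) by auto
  have "anc (J p0) w"
    using strict_anc_trans[OF J_anc_t[OF p0_L(1)] t_anc_w] .
  then have "lam w < lam (J p0)"
    using p0(3) label_neq by (meson nat_neq_iff)
  moreover have "lam (J p0) \<le> lam (J last_low)"
  proof (cases "p0 = last_low")
    case False
    have ll_L: "last_low < L"
      using ll(1) first_in_block(1) by auto
    then have "r ! p0 < r ! last_low"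
      using pattern_low_entry[OF J_occ, of p0 last_low] False ll(2) p0(2) unfolding pivot_def by simp
    then show ?thesis
      using occurrence_less_iff[OF J_occ p0_L(2) ll_L] by simp
  qed simp
  ultimately show "lam w < lam (J last_low)"
    by simp
qed

lemma high_after_last_low:
  assumes "\<not> splice_from_start" "last_low < q" "q \<le> hi"
  shows "pivot < r ! q"
proof -
  have "\<not> r ! q < pivot"
  proof
    assume low: "r ! q < pivot"
    then have "q \<in> {p. p < first_in_block \<and> r ! p < pivot}"
      using low_before_first assms(3) by simp
    then have "q \<le> last_low"
      unfolding last_low_def by (simp add: Max_ge)
    then show False
      using assms(2) by simp
  qed
  then show ?thesis
    using pattern_neq_pivot[of q] assms(3) hi(3) by simp
qed

lemma g_last_low_below_w: "\<not> splice_from_start \<Longrightarrow> lam (g last_low) < lam w"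
  using occurrence_less_iff[OF g_occ, of last_low "L - 1"] last_low(1,2) first_in_block(1) g_last
  unfolding pivot_def by simp

lemma g_last_low_anc_J:
  assumes "\<not> splice_from_start"
  shows "anc (g last_low) (J last_low)"
proof -
  note ll = last_low[OF assms]
  have ll_L: "last_low < L - 1"
    using ll(1) first_in_block(1) by simp
  have "anc (g last_low) (g first_in_block)"
    using occurrence_anc[OF g_occ ll(1)] first_in_block(1) by simp
  then have g_t: "anc (g last_low) t"
    using strict_anc_by_label[OF _ larger_desc_anc[OF first_in_block(2)]]
      g_last_low_below_w[OF assms] w_below_t larger_desc_less[OF first_in_block(2)] by simp
  have J_t: "anc (J last_low) t"
    using J_anc_t[OF ll_L] .
  have "lam (J last_low) < lam t"
    using J_above_t_iff[OF ll_L] ll(2) label_neq[OF J_t] by (meson nat_neq_iff less_asym)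
  then show ?thesis
    using strict_anc_by_label[OF g_t J_t] g_last_low_below_w[OF assms] ll(3) by simp
qed

lemma g_anc_J_across_last_low:
  assumes "\<not> splice_from_start" "i \<le> last_low" "last_low < j" "j \<le> hi"
  shows "anc (g i) (J j)"
proof -
  have "anc (J last_low) (J j)"
    using occurrence_anc[OF J_occ assms(3)] assms(4) hi(3) by simp
  then have ll_J: "anc (g last_low) (J j)"
    using strict_anc_trans[OF g_last_low_anc_J[OF assms(1)]] by blast
  show ?thesis
  proof (cases "i = last_low")
    case False
    then show ?thesis
      using strict_anc_trans[OF occurrence_anc[OF g_occ, of i last_low] ll_J] assms(2)
        last_low(1)[OF assms(1)] first_in_block(1) by simp
  qed (use ll_J in simp)
qed

lemma cross_low:
  assumes "\<not> splice_from_start" "i \<le> last_low" "last_low < j" "j \<le> hi"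
  shows "anc (g i) (J j) \<and> concordant (r ! i) (r ! j) (lam (g i)) (lam (J j))"
proof -
  note ll = last_low[OF assms(1)]
  have j_L: "j < L - 1"
    using assms(4) hi(3) by simp
  have i_L: "i < L - 1" "last_low < L"
    using assms(2) ll(1) first_in_block(1) by auto
  have anc: "anc (g i) (J j)"
    using g_anc_J_across_last_low[OF assms] .
  have rj: "pivot < r ! j"
    using high_after_last_low[OF assms(1,3,4)] .
  have "concordant (r ! i) (r ! j) (lam (g i)) (lam (J j))"
  proof (cases "r ! i < pivot")
    case True
    have "lam (g i) < lam w"
      using occurrence_less_iff[OF g_occ, of i "L - 1"] True i_L g_last unfolding pivot_def by simp
    then show ?thesis
      using True rj J_above_t_iff[OF j_L] w_below_t unfolding concordant_def by simp
  next
    case False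
    then have ri: "pivot < r ! i"
      using pattern_neq_pivot[OF i_L(1)] by simp
    then have i_ll: "i < last_low"
      using assms(2) ll(2) by (cases "i = last_low") auto
    have "\<not> (r ! last_low < r ! i \<and> r ! i < r ! j)"
      using pattern_no_213[OF g_occ i_ll assms(3)] j_L by simp
    moreover have "r ! i \<noteq> r ! j"
      using pattern_neq[OF g_occ, of i j] i_ll assms(3) j_L by simp
    ultimately have r_order: "r ! j < r ! i"
      using ll(2) ri by auto
    have "lam (g last_low) < lam (g i)"
      using occurrence_less_iff[OF g_occ, of last_low i] ll(2) ri i_L by simp
    then have "lam (J j) < lam (g i)"
      using label_path_below[OF occurrence_anc[OF g_occ i_ll i_L(2)]
          g_anc_J_across_last_low[OF assms(1) order.refl assms(3,4)]] by blast
    with r_order show ?thesis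
      unfolding concordant_def by simp
  qed
  with anc show ?thesis
    by simp
qed

lemma lo_le_first: "lo \<le> first_in_block"
  using last_low(1) unfolding lo_def by auto

lemma J_segment_low_below_w:
  assumes "lo \<le> i" "i \<le> hi" "r ! i < pivot"
  shows "lam (J i) < lam w"
proof (cases splice_from_start)
  case True
  then show ?thesis
    using low_before_first[OF assms(2,3)] assms(3) unfolding splice_from_start_def by blast
next
  case False
  then have "last_low < i"
    using assms(1) unfolding lo_def by simp
  then show ?thesis
    using high_after_last_low[OF False _ assms(2)] assms(3) by simp
qed

lemma cross_high:
  assumes "lo \<le> i" "i \<le> hi" "hi < j" "j < L"
  shows "anc (J i) (g j) \<and> concordant (r ! i) (r ! j) (lam (J i)) (lam (g j))"
proof -
  have i_L: "i < L - 1"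
    using assms(2) hi(3) by simp
  have anc: "anc (J i) (g j)"
    using strict_anc_trans[OF J_anc_t[OF i_L] after_hi_below_t(1)[OF assms(3,4)]] .
  have "concordant (r ! i) (r ! j) (lam (J i)) (lam (g j))"
  proof (cases "pivot < r ! i")
    case True
    then have "lam t < lam (J i)"
      using J_above_t_iff[OF i_L] by simp
    then show ?thesis
      using after_hi_smaller[OF True assms(2,3,4)] after_hi_below_t(2)[OF assms(3,4)]
      unfolding concordant_def by simp
  next
    case False
    then have ri: "r ! i < pivot"
      using pattern_neq_pivot[OF i_L] by simp
    have Jw: "lam (J i) < lam w"
      using J_segment_low_below_w[OF assms(1,2) ri] .
    have "r ! i < r ! j"
      using pattern_low_entry[OF g_occ _ assms(4)] ri assms(2,3) unfolding pivot_def by simp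
    moreover have "lam (J i) < lam (g j)"
    proof (cases "j = L - 1")
      case False
      then have "anc (g j) w"
        using occurrence_anc[OF g_occ, of j "L - 1"] g_last assms(4) by simp
      then show ?thesis
        using label_path_above[OF anc] Jw by blast
    qed (use Jw g_last in simp)
    ultimately show ?thesis
      unfolding concordant_def by simp
  qed
  with anc show ?thesis
    by simp
qed

lemma spliced_pair:
  assumes "i < j" "j < L"
  shows "anc (spliced i) (spliced j) \<and>
    concordant (r ! i) (r ! j) (lam (spliced i)) (lam (spliced j))"
proof -
  consider (g) "spliced i = g i" "spliced j = g j"
    | (J) "spliced i = J i" "spliced j = J j"
    | (low) "i < lo" "lo \<le> j" "j \<le> hi"
    | (high) "lo \<le> i" "i \<le> hi" "hi < j"
    unfolding spliced_def using assms(1)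
    by (cases "lo \<le> i"; cases "i \<le> hi"; cases "lo \<le> j"; cases "j \<le> hi") auto
  then show ?thesis
  proof cases
    case g
    then show ?thesis using occurrence_pair[OF g_occ assms] by simp
  next
    case J
    then show ?thesis using occurrence_pair[OF J_occ assms] by simp
  next
    case low
    then have "\<not> splice_from_start" "lo = Suc last_low"
      unfolding lo_def by (auto split: if_splits)
    then show ?thesis
      using cross_low[of i j] low unfolding spliced_def by simp
  next
    case high
    then show ?thesis
      using cross_high[OF high assms(2)] unfolding spliced_def by simp
  qed
qed

lemma spliced_occurrence: "occurrence n f lam r spliced"
proof (rule occurrenceI)
  fix i assume "i < L"
  then show "spliced i \<in> {1..n}"
    using occurrence_vertex[OF g_occ] occurrence_vertex[OF J_occ] unfolding spliced_def by simp
qed (use spliced_pair in blast)+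

lemma spliced_last: "spliced (L - 1) = w"
  using hi(3) g_last unfolding spliced_def by simp

lemma spliced_i0: "spliced i0 = J i0"
  using lo_le_first first_in_block(3) i0_le_hi unfolding spliced_def by simp

lemma spliced_from: "spliced i = g i \<or> spliced i = J i"
  unfolding spliced_def by simp

end

context forest_213
begin

lemma covered_count_decrease:
  assumes g: "occurrence n f lam r g" "g (L - 1) = w" and cov: "i0 < L - 1" "g i0 \<in> U"
    and IH: "\<And>y. anc y w \<Longrightarrow> y \<in> X \<Longrightarrow>
      \<exists>J. occurrence n f lam r J \<and> J (L - 1) = y \<and> (\<forall>i<L - 1. J i \<notin> U)"
  shows "\<exists>g'. occurrence n f lam r g' \<and> g' (L - 1) = w \<and> covered_count g' < covered_count g"
proof -
  obtain t where t: "t \<in> T" "g i0 \<in> B t"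
    using covered_in_top_block[OF cov(2)] by blast
  have tw: "anc t w"
    using strict_anc_trans[OF larger_desc_anc[OF t(2)] occurrence_anc[OF g(1) cov(1)]] g(2)
      last_less_length by simp
  obtain J where J: "occurrence n f lam r J" "J (L - 1) = t" "\<forall>i<L - 1. J i \<notin> U"
    using IH[OF tw] t(1) tops_subset_ends by blast
  show ?thesis
  proof (cases "w \<in> B t")
    case True
    let ?g' = "J(L - 1 := w)"
    have "occurrence n f lam r ?g'"
      using occurrence_replace_last[OF J(1)] J(2) True by simp
    moreover have "covered_count ?g' < covered_count g"
      by (rule covered_count_less[of ?g' g J i0]) (use J(3) cov in auto)
    ultimately show ?thesis
      by (intro exI[of _ ?g']) simp
  next
    case False
    interpret splice n f lam r g J w t i0
      by unfold_locales (use forest lam_inj avoids r_nonempty g J t(2) cov(1) tw False in auto)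
    have "covered_count spliced < covered_count g"
      by (rule covered_count_less[of spliced g J i0]) (use spliced_from J(3) cov spliced_i0 in auto)
    then show ?thesis
      using spliced_occurrence spliced_last by blast
  qed
qed

text \<open>Induction on the depth of w: an occurrence ending at w with the fewest covered vertices
  has none besides w, since otherwise splicing in an uncovered occurrence ending at the top above a
  covered vertex would reduce their number.\<close>
lemma clean_occurrence_exists:
  "w \<in> X \<Longrightarrow> \<exists>g. occurrence n f lam r g \<and> g (L - 1) = w \<and> (\<forall>i<L - 1. g i \<notin> U)"
proof (induction w rule: strict_anc_induct[OF forest])
  case (1 w)
  obtain g0 where "occurrence n f lam r g0" "g0 (L - 1) = w"
    using 1(2) by (rule occ_endsE)
  then obtain g where g: "occurrence n f lam r g" "g (L - 1) = w"
    and min: "\<And>g'. occurrence n f lam r g' \<and> g' (L - 1) = w \<Longrightarrow> covered_count g \<le> covered_count g'"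
    using ex_has_least_nat[of "\<lambda>g. occurrence n f lam r g \<and> g (L - 1) = w" g0 covered_count]
    by blast
  have "\<forall>i<L - 1. g i \<notin> U"
  proof (intro allI impI notI)
    fix i0 assume "i0 < L - 1" "g i0 \<in> U"
    then obtain g' where "occurrence n f lam r g'" "g' (L - 1) = w"
      "covered_count g' < covered_count g"
      using covered_count_decrease[OF g] 1(1) by blast
    then show False
      using min[of g'] by simp
  qed
  with g show ?case
    by blast
qed

end

section \<open>Appending two entries just above the last one\<close>

definition just_above_last :: "nat list \<Rightarrow> nat \<Rightarrow> bool" where
  "just_above_last r p \<longleftrightarrow> r ! (length r - 1) < p \<and>
     (\<forall>i<length r - 1. r ! i \<noteq> p \<and> (r ! i < r ! (length r - 1) \<longleftrightarrow> r ! i < p))"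

context forest_213
begin

lemma larger_desc_extends_occurrence:
  assumes h: "occurrence n f lam r h" and v: "v \<in> B (h (L - 1))"
    and p: "just_above_last r p" and i: "i < L"
  shows "anc (h i) v \<and> concordant (r ! i) p (lam (h i)) (lam v)"
proof (cases "i = L - 1")
  case True
  then show ?thesis
    using larger_desc_anc[OF v] larger_desc_less[OF v] p unfolding just_above_last_def concordant_def
    by simp
next
  case False
  then have i': "i < L - 1"
    using i by simp
  have "anc (h i) (h (L - 1))"
    using occurrence_anc[OF h i'] last_less_length by simp
  then have anc: "anc (h i) v"
    using strict_anc_trans larger_desc_anc[OF v] by blast
  have "lam (h i) \<noteq> lam (h (L - 1))"
    using label_neq[OF \<open>anc (h i) (h (L - 1))\<close>] .
  moreover have "lam (h i) < lam (h (L - 1)) \<longleftrightarrow> r ! i < p"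
    using occurrence_less_iff[OF h i last_less_length] p i' unfolding just_above_last_def by simp
  moreover have "r ! i \<noteq> p"
    using p i' unfolding just_above_last_def by simp
  ultimately have "concordant (r ! i) p (lam (h i)) (lam v)"
    using larger_desc_same_side[OF h i' v] unfolding concordant_def by auto
  with anc show ?thesis
    by simp
qed

lemma occurrence_append_larger_desc:
  assumes g: "occurrence n f lam (r @ [p1, p2]) g"
    and p1: "just_above_last r p1" and p2: "just_above_last r p2"
  shows "g L \<in> B (g (L - 1))" "g (L + 1) \<in> B (g (L - 1))" "anc (g L) (g (L + 1))"
    and "lam (g L) < lam (g (L + 1)) \<longleftrightarrow> p1 < p2"
proof -
  have less: "L - 1 < L" "L - 1 < L + 2" "L < L + 2" "L + 1 < L + 2"
    using last_less_length by auto
  have "anc (g (L - 1)) (g L)" "anc (g (L - 1)) (g (L + 1))"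
    using occurrence_anc[OF g] less by auto
  moreover have "lam (g (L - 1)) < lam (g L)" "lam (g (L - 1)) < lam (g (L + 1))"
    using occurrence_less_iff[OF g] less p1 p2 unfolding just_above_last_def by (auto simp: nth_append)
  ultimately show "g L \<in> B (g (L - 1))" "g (L + 1) \<in> B (g (L - 1))"
    unfolding larger_desc_def by auto
  show "anc (g L) (g (L + 1))"
    using occurrence_anc[OF g] less by auto
  show "lam (g L) < lam (g (L + 1)) \<longleftrightarrow> p1 < p2"
    using occurrence_less_iff[OF g] less by (auto simp: nth_append)
qed

lemma occurrence_append_of_larger_desc:
  assumes h: "occurrence n f lam r h"
    and yz: "y \<in> B (h (L - 1))" "z \<in> B (h (L - 1))" "anc y z" "lam y < lam z \<longleftrightarrow> p1 < p2"
    and p1: "just_above_last r p1" and p2: "just_above_last r p2" and "p1 \<noteq> p2"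
  shows "occurrence n f lam (r @ [p1, p2]) (\<lambda>i. if i < L then h i else if i = L then y else z)"
    (is "occurrence n f lam ?p ?g")
proof (rule occurrenceI)
  fix i assume "i < length ?p"
  moreover have "y \<in> {1..n}" "z \<in> {1..n}"
    using strict_anc_in_vertices(2)[OF forest] larger_desc_anc yz(1,2) by blast+
  ultimately show "?g i \<in> {1..n}"
    using occurrence_vertex[OF h] by auto
next
  fix i j assume ij: "i < j" "j < length ?p"
  consider "j < L" | "i < L" "j = L" | "i < L" "j = Suc L" | "i = L" "j = Suc L"
    using ij by fastforce
  then have "anc (?g i) (?g j) \<and> concordant (?p ! i) (?p ! j) (lam (?g i)) (lam (?g j))"
  proof cases
    case 1
    then show ?thesis
      using occurrence_pair[OF h ij(1)] ij by (simp add: nth_append)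
  next
    case 2
    then show ?thesis
      using larger_desc_extends_occurrence[OF h yz(1) p1] by (simp add: nth_append)
  next
    case 3
    then show ?thesis
      using larger_desc_extends_occurrence[OF h yz(2) p2] by (simp add: nth_append)
  next
    case 4
    then show ?thesis
      using yz(3,4) label_neq[OF yz(3)] \<open>p1 \<noteq> p2\<close> unfolding concordant_def
      by (auto simp: nth_append)
  qed
  then show "anc (?g i) (?g j)" "concordant (?p ! i) (?p ! j) (lam (?g i)) (lam (?g j))"
    by simp_all
qed

lemma occurrence_append_iff:
  assumes "just_above_last r p1" "just_above_last r p2" "p1 \<noteq> p2"
  shows "(\<exists>g. occurrence n f lam (r @ [p1, p2]) g) \<longleftrightarrow>
    (\<exists>x\<in>X. \<exists>y z. y \<in> B x \<and> z \<in> B x \<and> anc y z \<and> (lam y < lam z \<longleftrightarrow> p1 < p2))"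
proof
  assume "\<exists>g. occurrence n f lam (r @ [p1, p2]) g"
  then obtain g where g: "occurrence n f lam (r @ [p1, p2]) g"
    by blast
  have "g (L - 1) \<in> X"
    using occ_endsI[OF occurrence_append_prefix[OF g]] .
  then show "\<exists>x\<in>X. \<exists>y z. y \<in> B x \<and> z \<in> B x \<and> anc y z \<and> (lam y < lam z \<longleftrightarrow> p1 < p2)"
    using occurrence_append_larger_desc[OF g assms(1,2)] by blast
next
  assume "\<exists>x\<in>X. \<exists>y z. y \<in> B x \<and> z \<in> B x \<and> anc y z \<and> (lam y < lam z \<longleftrightarrow> p1 < p2)"
  then obtain h y z where "occurrence n f lam r h" "y \<in> B (h (L - 1))" "z \<in> B (h (L - 1))"
    "anc y z" "lam y < lam z \<longleftrightarrow> p1 < p2"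
    by (metis occ_endsE)
  then show "\<exists>g. occurrence n f lam (r @ [p1, p2]) g"
    using occurrence_append_of_larger_desc assms by blast
qed

end

section \<open>Reversing the labels inside the blocks\<close>

definition mirror :: "'a::linorder set \<Rightarrow> 'a \<Rightarrow> 'a" where
  "mirror S v = (let xs = sorted_list_of_set S in rev xs ! (THE i. i < length xs \<and> xs ! i = v))"

lemma strict_sorted_nth_less_iff:
  fixes xs :: "'a::linorder list"
  assumes "sorted_wrt (<) xs" "i < length xs" "j < length xs"
  shows "xs ! i < xs ! j \<longleftrightarrow> i < j"
proof
  assume less: "xs ! i < xs ! j"
  show "i < j"
  proof (rule ccontr)
    assume "\<not> i < j"
    then consider "j < i" | "j = i"
      by linarith
    then show False
    proof cases
      case 1
      then show False
        using sorted_wrt_nth_less[OF assms(1) 1 assms(2)] less by simp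
    qed (use less in simp)
  qed
qed (use sorted_wrt_nth_less assms in blast)

lemma mirror_nth:
  assumes "finite S" "i < card S"
  shows "mirror S (sorted_list_of_set S ! i) = sorted_list_of_set S ! (card S - 1 - i)"
proof -
  let ?xs = "sorted_list_of_set S"
  have "(THE j. j < length ?xs \<and> ?xs ! j = ?xs ! i) = i"
    using assms(2) by (intro the_equality) (auto simp: nth_eq_iff_index_eq)
  then show ?thesis
    unfolding mirror_def Let_def using assms(2) by (simp add: rev_nth)
qed

lemma sorted_list_of_set_nthE:
  assumes "finite S" "v \<in> S"
  obtains i where "i < card S" "v = sorted_list_of_set S ! i"
  using assms by (metis in_set_conv_nth length_sorted_list_of_set set_sorted_list_of_set)

lemma mirror_in:
  assumes "finite S" "v \<in> S"
  shows "mirror S v \<in> S"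
proof -
  obtain i where i: "i < card S" "v = sorted_list_of_set S ! i"
    using sorted_list_of_set_nthE[OF assms] .
  then have "sorted_list_of_set S ! (card S - 1 - i) \<in> set (sorted_list_of_set S)"
    by (intro nth_mem) auto
  then show ?thesis
    using i mirror_nth[OF assms(1)] assms(1) by simp
qed

lemma mirror_mirror:
  assumes "finite S" "v \<in> S"
  shows "mirror S (mirror S v) = v"
proof -
  obtain i where i: "i < card S" "v = sorted_list_of_set S ! i"
    using sorted_list_of_set_nthE[OF assms] .
  then have "card S - 1 - i < card S" "card S - 1 - (card S - 1 - i) = i"
    by auto
  then show ?thesis
    using i mirror_nth[OF assms(1)] by simp
qed

lemma mirror_less_iff:
  assumes "finite S" "u \<in> S" "v \<in> S"
  shows "mirror S u < mirror S v \<longleftrightarrow> v < u"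
proof -
  let ?xs = "sorted_list_of_set S"
  have sorted: "sorted_wrt (<) ?xs"
    by simp
  obtain i where i: "i < card S" "u = ?xs ! i"
    using sorted_list_of_set_nthE[OF assms(1,2)] .
  obtain j where j: "j < card S" "v = ?xs ! j"
    using sorted_list_of_set_nthE[OF assms(1,3)] .
  have "mirror S u < mirror S v \<longleftrightarrow> ?xs ! (card S - 1 - i) < ?xs ! (card S - 1 - j)"
    using i j mirror_nth[OF assms(1)] by simp
  also have "\<dots> \<longleftrightarrow> card S - 1 - i < card S - 1 - j"
    using strict_sorted_nth_less_iff[OF sorted] i j by simp
  also have "\<dots> \<longleftrightarrow> ?xs ! j < ?xs ! i"
    using strict_sorted_nth_less_iff[OF sorted] i j by auto
  finally show ?thesis
    using i j by simp
qed

definition block_mirror :: "nat \<Rightarrow> (nat \<Rightarrow> nat) \<Rightarrow> nat list \<Rightarrow> nat \<Rightarrow> nat" where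
  "block_mirror n f r v =
    (if v \<in> covered n f id r
     then mirror (larger_desc f id (THE t. t \<in> tops n f id r \<and> v \<in> larger_desc f id t)) v
     else v)"

text \<open>The forest f relabelled by the block mirror: vertex \<open>block_mirror n f r v\<close> receives the parent
  \<open>block_mirror n f r (f v)\<close>, using that the block mirror is an involution.\<close>
definition block_swap :: "nat \<Rightarrow> nat list \<Rightarrow> (nat \<Rightarrow> nat) \<Rightarrow> nat \<Rightarrow> nat" where
  "block_swap n r f = block_mirror n f r \<circ> f \<circ> block_mirror n f r"

locale id_forest_213 = forest_213 n f id r for n f r
begin

abbreviation "\<sigma> \<equiv> block_mirror n f r"

lemmas path_above = label_path_above[unfolded id_apply]
lemmas path_below = label_path_below[unfolded id_apply]

lemma larger_desc_greater: "v \<in> B x \<Longrightarrow> x < v"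
  using larger_desc_less by simp

lemma exit_below: "v \<in> B x \<Longrightarrow> anc v w \<Longrightarrow> w \<notin> B x \<Longrightarrow> w < x"
  using larger_desc_exit_below by simp

lemma finite_larger_desc: "finite (B x)"
  by (rule finite_subset[of _ "{1..n}"])
    (use strict_anc_in_vertices[OF forest] in \<open>auto simp: larger_desc_def\<close>)

lemma covered_vertex: "v \<in> U \<Longrightarrow> v \<in> {1..n}"
  unfolding covered_def larger_desc_def using strict_anc_in_vertices[OF forest] by auto

lemma top_not_covered: "t \<in> T \<Longrightarrow> t \<notin> U"
  unfolding tops_def by simp

lemma block_mirror_block:
  assumes "t \<in> T" "v \<in> B t"
  shows "\<sigma> v = mirror (B t) v"
proof -
  have "(THE t. t \<in> T \<and> v \<in> B t) = t"
    using assms top_block_unique by blast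
  moreover have "v \<in> U"
    using larger_desc_covered assms by auto
  ultimately show ?thesis
    unfolding block_mirror_def by simp
qed

lemma block_mirror_outside: "v \<notin> U \<Longrightarrow> \<sigma> v = v"
  unfolding block_mirror_def by simp

lemma block_mirror_in_block: "t \<in> T \<Longrightarrow> v \<in> B t \<Longrightarrow> \<sigma> v \<in> B t"
  using block_mirror_block mirror_in[OF finite_larger_desc] by simp

lemma block_mirror_less_iff:
  "t \<in> T \<Longrightarrow> u \<in> B t \<Longrightarrow> v \<in> B t \<Longrightarrow> \<sigma> u < \<sigma> v \<longleftrightarrow> v < u"
  using block_mirror_block mirror_less_iff[OF finite_larger_desc] by simp

lemma block_mirror_block_mirror [simp]: "\<sigma> (\<sigma> v) = v"
proof (cases "v \<in> U")
  case True
  then obtain t where t: "t \<in> T" "v \<in> B t"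
    by (rule covered_in_top_block)
  then show ?thesis
    using block_mirror_block[OF t] block_mirror_block[OF t(1) block_mirror_in_block[OF t]]
      mirror_mirror[OF finite_larger_desc] by simp
qed (simp add: block_mirror_outside)

lemma inj_block_mirror: "inj \<sigma>"
  by (metis injI block_mirror_block_mirror)

lemma block_mirror_covered_iff: "\<sigma> v \<in> U \<longleftrightarrow> v \<in> U"
  by (metis block_mirror_in_block block_mirror_outside covered_in_top_block larger_desc_covered subsetD)

lemma block_mirror_vertex_iff: "\<sigma> v \<in> {1..n} \<longleftrightarrow> v \<in> {1..n}"
  by (metis covered_vertex block_mirror_covered_iff block_mirror_outside)

lemma block_mirror_zero: "\<sigma> 0 = 0"
  using covered_vertex block_mirror_outside by force

definition same_block :: "nat \<Rightarrow> nat \<Rightarrow> bool" where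
  "same_block u v \<longleftrightarrow> (\<exists>t\<in>T. u \<in> B t \<and> v \<in> B t)"

lemma same_block_covered: "same_block u v \<Longrightarrow> u \<in> U \<and> v \<in> U"
  unfolding same_block_def using larger_desc_covered by blast

lemma outside_block_same_side:
  assumes t: "t \<in> T" and b: "b \<in> B t" "b' \<in> B t" and z: "z \<notin> B t"
    and comparable: "anc z b \<or> anc b z"
  shows "z < b \<longleftrightarrow> z < b'"
proof -
  have tb: "t < b" "t < b'"
    using b larger_desc_greater by auto
  from comparable show ?thesis
  proof
    assume zb: "anc z b"
    have "z = t \<or> anc t z \<or> anc z t"
      using strict_anc_linear[OF zb larger_desc_anc[OF b(1)]] by blast
    moreover have "\<not> anc t z"
    proof
      assume tz: "anc t z"
      then have "t < z"
        using path_above[OF _ zb tb(1)] by simp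
      then show False
        using z tz unfolding larger_desc_def by simp
    qed
    moreover have "z < b \<longleftrightarrow> z < b'" if zt: "anc z t"
    proof (cases "z < t")
      case False
      then have "t < z"
        using strict_anc_neq[OF forest zt] by simp
      then show ?thesis
        using path_below[OF zt larger_desc_anc[OF b(1)]] path_below[OF zt larger_desc_anc[OF b(2)]]
        by fastforce
    qed (use tb in simp)
    ultimately show ?thesis
      using tb by auto
  next
    assume "anc b z"
    then show ?thesis
      using exit_below[OF b(1) _ z] tb by auto
  qed
qed

lemma lower_block_smaller:
  assumes t: "t \<in> T" "t' \<in> T" "t \<noteq> t'" and b: "b \<in> B t" "b' \<in> B t'" "anc b b'"
    and xy: "x \<in> B t" "y \<in> B t'"
  shows "y < x"
proof -
  have "t' = b \<or> anc t' b \<or> anc b t'"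
    using strict_anc_linear[OF larger_desc_anc[OF b(2)] b(3)] .
  moreover have "t' \<noteq> b"
    using top_not_covered[OF t(2)] larger_desc_covered[OF t(1)] b(1) by auto
  moreover have "\<not> anc t' b"
  proof
    assume t'b: "anc t' b"
    then have "b \<in> B t'"
      using path_above[OF t'b b(3) larger_desc_greater[OF b(2)]] unfolding larger_desc_def by simp
    then show False
      using top_block_unique[OF t(1,2) b(1)] t(3) by simp
  qed
  ultimately have bt': "anc b t'"
    by blast
  have "t' \<notin> B t"
    using top_not_covered[OF t(2)] larger_desc_covered[OF t(1)] by auto
  then have "t' < t"
    using exit_below[OF b(1) bt'] by simp
  moreover have "y \<notin> B t"
    using top_block_unique[OF t(1,2) _ xy(2)] t(3) by auto
  then have "y < t"
    using exit_below[OF b(1) strict_anc_trans[OF bt' larger_desc_anc[OF xy(2)]]] by simp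
  then show ?thesis
    using larger_desc_greater[OF xy(1)] by simp
qed

lemma block_mirror_outside_compare:
  assumes "v \<in> U" "u \<notin> U" "anc u v \<or> anc v u"
  shows "u < \<sigma> v \<longleftrightarrow> u < v"
proof -
  obtain t where t: "t \<in> T" "v \<in> B t"
    using covered_in_top_block[OF assms(1)] .
  have "u \<notin> B t"
    using assms(2) larger_desc_covered[OF t(1)] by auto
  then show ?thesis
    using outside_block_same_side[OF t block_mirror_in_block[OF t]] assms(3) by blast
qed

lemma block_mirror_anc_less_iff:
  assumes uv: "anc u v"
  shows "\<sigma> u < \<sigma> v \<longleftrightarrow> (if same_block u v then v < u else u < v)"
proof (cases "u \<in> U"; cases "v \<in> U")
  assume u: "u \<in> U" and v: "v \<in> U"
  obtain tu where tu: "tu \<in> T" "u \<in> B tu"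
    using covered_in_top_block[OF u] .
  obtain tv where tv: "tv \<in> T" "v \<in> B tv"
    using covered_in_top_block[OF v] .
  show ?thesis
  proof (cases "tu = tv")
    case True
    then have "same_block u v"
      unfolding same_block_def using tu tv by auto
    then show ?thesis
      using block_mirror_less_iff[OF tu] tv True by simp
  next
    case False
    then have "\<not> same_block u v"
      unfolding same_block_def using top_block_unique tu tv by metis
    moreover have "v < u" "\<sigma> v < \<sigma> u"
      using lower_block_smaller[OF tu(1) tv(1) False tu(2) tv(2) uv] tu tv block_mirror_in_block
      by auto
    ultimately show ?thesis
      by simp
  qed
next
  assume u: "u \<in> U" and v: "v \<notin> U"
  have "u \<noteq> v" "\<sigma> u \<noteq> v"
    using strict_anc_neq[OF forest uv] block_mirror_covered_iff u v by auto
  then show ?thesis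
    using block_mirror_outside_compare[OF u v] uv same_block_covered v block_mirror_outside[OF v]
    by auto
next
  assume "u \<notin> U" "v \<in> U"
  then show ?thesis
    using block_mirror_outside_compare uv same_block_covered block_mirror_outside by auto
next
  assume "u \<notin> U" "v \<notin> U"
  then show ?thesis
    using same_block_covered block_mirror_outside by auto
qed

lemma block_mirror_anc_greater_iff:
  assumes uv: "anc u v"
  shows "\<sigma> v < \<sigma> u \<longleftrightarrow> (if same_block u v then u < v else v < u)"
proof -
  have "u \<noteq> v" "\<sigma> u \<noteq> \<sigma> v"
    using strict_anc_neq[OF forest uv] inj_block_mirror by (auto dest: injD)
  then show ?thesis
    using block_mirror_anc_less_iff[OF uv] by auto
qed

lemma block_mirror_no_213_in_block:
  assumes monotone: "\<And>t y z. t \<in> T \<Longrightarrow> y \<in> B t \<Longrightarrow> z \<in> B t \<Longrightarrow> anc y z \<Longrightarrow>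
    (if d then z < y else y < z)"
    and uv: "anc u v" and vw: "anc v w" and "same_block u w"
  shows "\<not> (\<sigma> v < \<sigma> u \<and> \<sigma> u < \<sigma> w)"
proof
  assume pattern: "\<sigma> v < \<sigma> u \<and> \<sigma> u < \<sigma> w"
  obtain t where t: "t \<in> T" "u \<in> B t" "w \<in> B t"
    using \<open>same_block u w\<close> unfolding same_block_def by blast
  have v: "v \<in> B t"
    using larger_desc_path_closed[OF t(2) uv vw t(3)] .
  have "u < v" "w < u"
    using pattern block_mirror_less_iff[OF t(1)] t(2,3) v by auto
  then show False
    using monotone[OF t(1,2) v uv] monotone[OF t(1,2,3) strict_anc_trans[OF uv vw]] by (cases d) auto
qed

lemma block_mirror_no_213_across_blocks:
  assumes uv: "anc u v" and vw: "anc v w" and not_uw: "\<not> same_block u w"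
  shows "\<not> (\<sigma> v < \<sigma> u \<and> \<sigma> u < \<sigma> w)"
proof
  assume pattern: "\<sigma> v < \<sigma> u \<and> \<sigma> u < \<sigma> w"
  then have "u < w"
    using block_mirror_anc_less_iff[OF strict_anc_trans[OF uv vw]] not_uw by simp
  show False
  proof (cases "same_block u v")
    case True
    then obtain t where t: "t \<in> T" "u \<in> B t" "v \<in> B t"
      unfolding same_block_def by blast
    then have "w \<notin> B t"
      using not_uw unfolding same_block_def by blast
    then have "w < t"
      using exit_below[OF t(3) vw] by simp
    then show False
      using larger_desc_greater[OF t(2)] \<open>u < w\<close> by simp
  next
    case not_uv: False
    then have "v < u"
      using block_mirror_anc_greater_iff[OF uv] pattern by simp
    show False
    proof (cases "same_block v w")
      case True
      then obtain t where t: "t \<in> T" "v \<in> B t" "w \<in> B t"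
        unfolding same_block_def by blast
      then have "u \<notin> B t"
        using not_uv unfolding same_block_def by blast
      then have "u < v \<longleftrightarrow> u < w"
        using outside_block_same_side[OF t] uv by blast
      then show False
        using \<open>v < u\<close> \<open>u < w\<close> by simp
    next
      case False
      then show False
        using avoids uv vw \<open>v < u\<close> \<open>u < w\<close> unfolding avoids_213_def by auto
    qed
  qed
qed

lemma avoids_213_block_mirror:
  assumes "\<And>t y z. t \<in> T \<Longrightarrow> y \<in> B t \<Longrightarrow> z \<in> B t \<Longrightarrow> anc y z \<Longrightarrow>
    (if d then z < y else y < z)"
  shows "avoids_213 f \<sigma>"
  unfolding avoids_213_def
proof (intro allI impI)
  fix u v w assume "anc u v" "anc v w"
  then show "\<not> (\<sigma> v < \<sigma> u \<and> \<sigma> u < \<sigma> w)"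
    using block_mirror_no_213_in_block[of d, OF assms] block_mirror_no_213_across_blocks
    by (cases "same_block u w") auto
qed

text \<open>When at most the last vertex of the occurrence is covered, its vertices lie in pairwise
  different blocks.\<close>
lemma occurrence_block_mirror_iff:
  assumes clean: "\<forall>i<L - 1. g i \<notin> U"
  shows "occurrence n f \<sigma> r g \<longleftrightarrow> occurrence n f id r g"
proof (rule occurrence_relabel_iff)
  fix i j assume ij: "i < j" "j < L" and anc: "anc (g i) (g j)"
  have "i < L - 1"
    using ij by simp
  then have "\<not> same_block (g i) (g j)"
    using clean same_block_covered by blast
  then show "(\<sigma> (g i) < \<sigma> (g j) \<longleftrightarrow> id (g i) < id (g j)) \<and>
      (\<sigma> (g j) < \<sigma> (g i) \<longleftrightarrow> id (g j) < id (g i))"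
    using block_mirror_anc_less_iff[OF anc] block_mirror_anc_greater_iff[OF anc] by simp
qed

abbreviation "\<phi> \<equiv> block_swap n r f"

lemma funpow_block_swap: "(\<phi> ^^ j) v = \<sigma> ((f ^^ j) (\<sigma> v))"
  by (induction j) (simp_all add: block_swap_def)

lemma block_mirror_eq_iff: "\<sigma> u = v \<longleftrightarrow> u = \<sigma> v"
  by auto

lemma strict_anc_block_swap: "strict_anc \<phi> u v \<longleftrightarrow> anc (\<sigma> u) (\<sigma> v)"
proof -
  have "u \<noteq> 0 \<longleftrightarrow> \<sigma> u \<noteq> 0"
    using block_mirror_zero block_mirror_eq_iff by metis
  then show ?thesis
    unfolding strict_anc_def funpow_block_swap block_mirror_eq_iff by simp
qed

lemma forest_block_swap: "forest n \<phi>"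
  unfolding forest_def
proof (intro conjI allI impI ballI)
  fix v assume "v \<notin> {1..n}"
  then have "f (\<sigma> v) = 0"
    using forest block_mirror_vertex_iff unfolding forest_def by blast
  then show "\<phi> v = 0"
    using block_mirror_zero by (simp add: block_swap_def)
next
  fix v assume "v \<in> {1..n}"
  then have v: "\<sigma> v \<in> {1..n}"
    using block_mirror_vertex_iff by blast
  show "\<phi> v \<le> n"
  proof (cases "f (\<sigma> v) = 0")
    case True
    then show ?thesis
      using block_mirror_zero by (simp add: block_swap_def)
  next
    case False
    then have "f (\<sigma> v) \<in> {1..n}"
      using forest v unfolding forest_def by auto
    then have "\<sigma> (f (\<sigma> v)) \<in> {1..n}"
      using block_mirror_vertex_iff by blast
    then show ?thesis
      by (simp add: block_swap_def)
  qed
  obtain j where "(f ^^ j) (\<sigma> v) = 0"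
    using forest v unfolding forest_def by blast
  then show "\<exists>j. (\<phi> ^^ j) v = 0"
    using funpow_block_swap block_mirror_zero by metis
qed

lemma occurrence_block_swap:
  "occurrence n \<phi> lam p g \<longleftrightarrow> occurrence n f (lam \<circ> \<sigma>) p (\<sigma> \<circ> g)"
  unfolding occurrence_def strict_anc_block_swap using block_mirror_vertex_iff by simp

lemma contains_block_swap: "contains n \<phi> p \<longleftrightarrow> (\<exists>g. occurrence n f \<sigma> p g)"
proof -
  have "contains n \<phi> p \<longleftrightarrow> (\<exists>g. occurrence n f \<sigma> p (\<sigma> \<circ> g))"
    unfolding contains_iff_occurrence occurrence_block_swap by simp
  also have "\<dots> \<longleftrightarrow> (\<exists>g. occurrence n f \<sigma> p g)"
  proof
    assume "\<exists>g. occurrence n f \<sigma> p g"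
    then obtain g where "occurrence n f \<sigma> p g" ..
    moreover have "\<sigma> \<circ> (\<sigma> \<circ> g) = g"
      by (simp add: comp_def)
    ultimately show "\<exists>g. occurrence n f \<sigma> p (\<sigma> \<circ> g)"
      by metis
  qed blast
  finally show ?thesis .
qed

lemma avoids_213_block_swap: "avoids_213 \<phi> id \<longleftrightarrow> avoids_213 f \<sigma>"
proof
  assume avoids_swap: "avoids_213 \<phi> id"
  show "avoids_213 f \<sigma>"
    unfolding avoids_213_def
  proof (intro allI impI)
    fix u v w assume "anc u v" "anc v w"
    then show "\<not> (\<sigma> v < \<sigma> u \<and> \<sigma> u < \<sigma> w)"
      using avoids_swap unfolding avoids_213_def strict_anc_block_swap
      by (metis block_mirror_block_mirror id_apply)
  qed
next
  assume avoids_mirror: "avoids_213 f \<sigma>"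
  show "avoids_213 \<phi> id"
    unfolding avoids_213_def strict_anc_block_swap
  proof (intro allI impI)
    fix u v w assume "anc (\<sigma> u) (\<sigma> v)" "anc (\<sigma> v) (\<sigma> w)"
    then show "\<not> (id v < id u \<and> id u < id w)"
      using avoids_mirror unfolding avoids_213_def by (metis block_mirror_block_mirror id_apply)
  qed
qed

lemma occ_ends_block_swap: "x \<in> occ_ends n \<phi> id r \<longleftrightarrow> \<sigma> x \<in> occ_ends n f \<sigma> r"
proof
  assume "x \<in> occ_ends n \<phi> id r"
  then obtain g where "occurrence n \<phi> id r g" "g (L - 1) = x"
    unfolding occ_ends_def by auto
  then show "\<sigma> x \<in> occ_ends n f \<sigma> r"
    unfolding occ_ends_def occurrence_block_swap by (intro CollectI exI[of _ "\<sigma> \<circ> g"]) auto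
next
  assume "\<sigma> x \<in> occ_ends n f \<sigma> r"
  then obtain g where g: "occurrence n f \<sigma> r g" "g (L - 1) = \<sigma> x"
    unfolding occ_ends_def by auto
  have "\<sigma> \<circ> (\<sigma> \<circ> g) = g"
    by (simp add: comp_def)
  then have "occurrence n \<phi> id r (\<sigma> \<circ> g)"
    unfolding occurrence_block_swap using g by simp
  moreover have "(\<sigma> \<circ> g) (L - 1) = x"
    using g by simp
  ultimately show "x \<in> occ_ends n \<phi> id r"
    unfolding occ_ends_def by blast
qed

lemma larger_desc_block_swap: "v \<in> larger_desc \<phi> id x \<longleftrightarrow> \<sigma> v \<in> larger_desc f \<sigma> (\<sigma> x)"
  unfolding larger_desc_def strict_anc_block_swap by simp

end

locale monotone_blocks = id_forest_213 +
  fixes d :: bool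
  assumes monotone: "t \<in> tops n f id r \<Longrightarrow> y \<in> larger_desc f id t \<Longrightarrow>
    z \<in> larger_desc f id t \<Longrightarrow> strict_anc f y z \<Longrightarrow> (if d then z < y else y < z)"

sublocale monotone_blocks \<subseteq> mirrored: forest_213 n f "block_mirror n f r" r
proof
  show "inj_on (block_mirror n f r) {1..n}"
    using inj_block_mirror by (meson inj_on_subset subset_UNIV)
  show "avoids_213 f (block_mirror n f r)"
    using avoids_213_block_mirror[of d] monotone by blast
qed (use forest r_nonempty in auto)

context monotone_blocks
begin

lemma ends_subset_mirrored: "X \<subseteq> mirrored.X"
proof
  fix w assume "w \<in> X"
  then obtain g where "occurrence n f id r g" "g (L - 1) = w" "\<forall>i<L - 1. g i \<notin> U"
    using clean_occurrence_exists by blast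
  then show "w \<in> mirrored.X"
    using occurrence_block_mirror_iff mirrored.occ_endsI by metis
qed

lemma mirrored_larger_desc_top:
  assumes "t \<in> T"
  shows "mirrored.B t = B t"
proof -
  have "\<sigma> t < \<sigma> v \<longleftrightarrow> t < v" if "anc t v" for v
    using block_mirror_anc_less_iff[OF that] same_block_covered top_not_covered[OF assms] by auto
  then show ?thesis
    unfolding larger_desc_def by auto
qed

lemma covered_subset_mirrored: "U \<subseteq> mirrored.U"
proof
  fix v assume "v \<in> U"
  then obtain t where "t \<in> T" "v \<in> B t"
    by (rule covered_in_top_block)
  then show "v \<in> mirrored.U"
    using mirrored_larger_desc_top ends_subset_mirrored tops_subset_ends unfolding covered_def by blast
qed

lemma mirrored_ends: "mirrored.X = X"
proof
  show "mirrored.X \<subseteq> X"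
  proof
    fix w assume "w \<in> mirrored.X"
    then obtain g where "occurrence n f \<sigma> r g" "g (L - 1) = w" "\<forall>i<L - 1. g i \<notin> mirrored.U"
      using mirrored.clean_occurrence_exists by blast
    then show "w \<in> X"
      using occurrence_block_mirror_iff covered_subset_mirrored occ_endsI by (metis subsetD)
  qed
qed (rule ends_subset_mirrored)

lemma mirrored_larger_desc_in_block:
  assumes "t \<in> T" "y \<in> B t" "v \<in> mirrored.B y"
  shows "v \<in> B t"
proof (rule ccontr)
  assume v: "v \<notin> B t"
  have yv: "anc y v" "\<sigma> y < \<sigma> v"
    using assms(3) unfolding larger_desc_def by auto
  have "\<not> same_block y v"
    using top_block_unique[OF assms(1) _ assms(2)] v unfolding same_block_def by metis
  then have "y < v"
    using block_mirror_anc_less_iff[OF yv(1)] yv(2) by simp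
  moreover have "v < t"
    using exit_below[OF assms(2) yv(1) v] .
  ultimately show False
    using larger_desc_greater[OF assms(2)] by simp
qed

lemma mirrored_covered: "mirrored.U = U"
proof
  show "mirrored.U \<subseteq> U"
  proof
    fix v assume "v \<in> mirrored.U"
    then obtain y where y: "y \<in> mirrored.X" "v \<in> mirrored.B y"
      unfolding covered_def by auto
    show "v \<in> U"
    proof (cases "y \<in> U")
      case True
      then obtain t where "t \<in> T" "y \<in> B t"
        by (rule covered_in_top_block)
      then show ?thesis
        using mirrored_larger_desc_in_block y(2) larger_desc_covered by blast
    next
      case False
      then have "y \<in> T"
        using y(1) mirrored_ends unfolding tops_def by simp
      then show ?thesis
        using y(2) mirrored_larger_desc_top larger_desc_covered by blast
    qed
  qed
qed (rule covered_subset_mirrored)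

lemma mirrored_monotone:
  assumes x: "x \<in> mirrored.X" and yz: "y \<in> mirrored.B x" "z \<in> mirrored.B x" "anc y z"
  shows "if d then \<sigma> y < \<sigma> z else \<sigma> z < \<sigma> y"
proof -
  obtain t where t: "t \<in> T" "y \<in> B t" "z \<in> B t"
  proof (cases "x \<in> U")
    case True
    then obtain t where "t \<in> T" "x \<in> B t"
      by (rule covered_in_top_block)
    then show thesis
      using that mirrored_larger_desc_in_block yz(1,2) by blast
  next
    case False
    then have "x \<in> T"
      using x mirrored_ends unfolding tops_def by simp
    then show thesis
      using that mirrored_larger_desc_top yz(1,2) by blast
  qed
  have "y \<noteq> z" "\<sigma> y \<noteq> \<sigma> z"
    using strict_anc_neq[OF forest yz(3)] inj_block_mirror by (auto dest: injD)
  then show ?thesis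
    using block_mirror_less_iff[OF t] monotone[OF t yz(3)] by (cases d) auto
qed

lemma covered_block_swap: "covered n \<phi> id r = U"
proof -
  have "v \<in> covered n \<phi> id r \<longleftrightarrow> \<sigma> v \<in> mirrored.U" for v
  proof
    assume "v \<in> covered n \<phi> id r"
    then obtain y where "y \<in> occ_ends n \<phi> id r" "v \<in> larger_desc \<phi> id y"
      unfolding covered_def by auto
    then show "\<sigma> v \<in> mirrored.U"
      unfolding covered_def occ_ends_block_swap larger_desc_block_swap by auto
  next
    assume "\<sigma> v \<in> mirrored.U"
    then obtain y where "y \<in> mirrored.X" "\<sigma> v \<in> mirrored.B y"
      unfolding covered_def by auto
    then have "\<sigma> y \<in> occ_ends n \<phi> id r" "v \<in> larger_desc \<phi> id (\<sigma> y)"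
      unfolding occ_ends_block_swap larger_desc_block_swap by auto
    then show "v \<in> covered n \<phi> id r"
      unfolding covered_def by auto
  qed
  then show ?thesis
    using mirrored_covered block_mirror_covered_iff by auto
qed

lemma occ_ends_block_swap_eq: "occ_ends n \<phi> id r = X"
proof -
  have "\<sigma> x \<in> X \<longleftrightarrow> x \<in> X" for x
    using block_mirror_covered_iff covered_subset_ends block_mirror_outside
    by (cases "x \<in> U") auto
  then show ?thesis
    using occ_ends_block_swap mirrored_ends by auto
qed

lemma tops_block_swap: "tops n \<phi> id r = T"
  unfolding tops_def using covered_block_swap occ_ends_block_swap_eq by simp

lemma larger_desc_block_swap_top:
  assumes t: "t \<in> T"
  shows "larger_desc \<phi> id t = B t"
proof -
  have "\<sigma> t = t"
    using block_mirror_outside top_not_covered[OF t] by simp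
  then have "v \<in> larger_desc \<phi> id t \<longleftrightarrow> \<sigma> v \<in> B t" for v
    using larger_desc_block_swap mirrored_larger_desc_top[OF t] by simp
  also have "\<sigma> v \<in> B t \<longleftrightarrow> v \<in> B t" for v
    using block_mirror_in_block[OF t] by (metis block_mirror_block_mirror)
  finally show ?thesis
    by auto
qed

lemma block_mirror_block_swap: "block_mirror n \<phi> r = \<sigma>"
proof
  fix v
  show "block_mirror n \<phi> r v = \<sigma> v"
  proof (cases "v \<in> U")
    case True
    then obtain t where t: "t \<in> T" "v \<in> B t"
      by (rule covered_in_top_block)
    then have "(THE t. t \<in> tops n \<phi> id r \<and> v \<in> larger_desc \<phi> id t) = t"
      using tops_block_swap larger_desc_block_swap_top top_block_unique by (intro the_equality) auto
    then show ?thesis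
      unfolding block_mirror_def[of n \<phi>] covered_block_swap
      using True t larger_desc_block_swap_top block_mirror_block by simp
  next
    case False
    then show ?thesis
      unfolding block_mirror_def[of n \<phi>] covered_block_swap using block_mirror_outside by simp
  qed
qed

lemma block_swap_block_swap: "block_swap n r \<phi> = f"
  unfolding block_swap_def[of n r \<phi>] block_mirror_block_swap by (simp add: block_swap_def comp_def)

end

section \<open>The bijection\<close>

lemma block_swap_avoids:
  assumes "forest n f" "avoids_213 f id" "r \<noteq> []"
    and p: "just_above_last r p1" "just_above_last r p2" "p1 \<noteq> p2"
    and avoids_p: "\<not> contains n f (r @ [p1, p2])"
  shows "forest n (block_swap n r f)" "avoids_213 (block_swap n r f) id"
    "\<not> contains n (block_swap n r f) (r @ [p2, p1])"
    "block_swap n r (block_swap n r f) = f"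
proof -
  interpret id_forest_213 n f r
    by unfold_locales (use assms(1-3) in auto)
  have "\<not> (y < z \<longleftrightarrow> p1 < p2)" if "x \<in> X" "y \<in> B x" "z \<in> B x" "anc y z" for x y z
    using occurrence_append_iff[OF p] avoids_p that unfolding contains_iff_occurrence by auto
  then have "if p1 < p2 then z < y else y < z" if "x \<in> X" "y \<in> B x" "z \<in> B x" "anc y z" for x y z
    using that strict_anc_neq[OF forest that(4)] by (auto simp: nat_neq_iff)
  then interpret monotone_blocks n f r "p1 < p2"
    by unfold_locales (use tops_subset_ends in blast)
  show "forest n \<phi>"
    using forest_block_swap .
  show "avoids_213 \<phi> id"
    using avoids_213_block_swap mirrored.avoids by simp
  show "block_swap n r \<phi> = f"
    using block_swap_block_swap .
  show "\<not> contains n \<phi> (r @ [p2, p1])"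
  proof
    assume "contains n \<phi> (r @ [p2, p1])"
    then obtain x y z where xyz: "x \<in> mirrored.X" "y \<in> mirrored.B x" "z \<in> mirrored.B x" "anc y z"
      "\<sigma> y < \<sigma> z \<longleftrightarrow> p2 < p1"
      using contains_block_swap mirrored.occurrence_append_iff[OF p(2,1)] p(3) by metis
    then show False
      using mirrored_monotone[OF xyz(1-4)] p(3) by (auto split: if_splits)
  qed
qed

lemma num_avoiders_swap_last_two:
  assumes "r \<noteq> []" "just_above_last r p1" "just_above_last r p2" "p1 \<noteq> p2"
  shows "num_avoiders n {[2,1,3], r @ [p1, p2]} = num_avoiders n {[2,1,3], r @ [p2, p1]}"
proof -
  have avoiders: "{f. forest n f \<and> avoids n f {[2,1,3], p}} =
      {f. forest n f \<and> avoids_213 f id \<and> \<not> contains n f p}" for p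
    unfolding avoids_def using contains_213_iff by auto
  have swap: "block_swap n r f \<in> {f. forest n f \<and> avoids_213 f id \<and> \<not> contains n f (r @ [q2, q1])}
      \<and> block_swap n r (block_swap n r f) = f"
    if "f \<in> {f. forest n f \<and> avoids_213 f id \<and> \<not> contains n f (r @ [q1, q2])}"
      "just_above_last r q1" "just_above_last r q2" "q1 \<noteq> q2" for f q1 q2
    using block_swap_avoids[of n f r q1 q2] that assms(1) by auto
  have "bij_betw (block_swap n r)
      {f. forest n f \<and> avoids_213 f id \<and> \<not> contains n f (r @ [p1, p2])}
      {f. forest n f \<and> avoids_213 f id \<and> \<not> contains n f (r @ [p2, p1])}"
    by (rule bij_betw_byWitness[where f' = "block_swap n r"])
      (use swap[of _ p1 p2] swap[of _ p2 p1] assms in blast)+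
  then show ?thesis
    unfolding num_avoiders_def avoiders by (rule bij_betw_same_card)
qed

lemma perm_split_last_two:
  assumes "k \<ge> 3" "length \<pi> = k" "is_perm \<pi>"
    and "\<pi> ! (k - 1) = \<pi> ! (k - 2) + 1" "\<pi> ! (k - 2) = \<pi> ! (k - 3) + 1"
  shows "\<pi> = take (k - 2) \<pi> @ [\<pi> ! (k - 2), \<pi> ! (k - 1)]"
    and "just_above_last (take (k - 2) \<pi>) (\<pi> ! (k - 2))"
    and "just_above_last (take (k - 2) \<pi>) (\<pi> ! (k - 1))"
proof -
  show "\<pi> = take (k - 2) \<pi> @ [\<pi> ! (k - 2), \<pi> ! (k - 1)]"
  proof (rule nth_equalityI)
    fix i assume "i < length \<pi>"
    then consider "i < k - 2" | "i = k - 2" | "i = k - 1"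
      using assms(2) by linarith
    then show "\<pi> ! i = (take (k - 2) \<pi> @ [\<pi> ! (k - 2), \<pi> ! (k - 1)]) ! i"
      by cases (use assms(1,2) in \<open>auto simp: nth_append\<close>)
  qed (use assms(1,2) in simp)
  have last: "take (k - 2) \<pi> ! (length (take (k - 2) \<pi>) - 1) = \<pi> ! (k - 3)"
    using assms(1,2) by (simp add: numeral_3_eq_3)
  have neq: "\<pi> ! i \<noteq> \<pi> ! j" if "i < k - 3" "k - 3 \<le> j" "j < k" for i j
    using assms(2,3) that nth_eq_iff_index_eq unfolding is_perm_def by fastforce
  have "just_above_last (take (k - 2) \<pi>) p"
    if p: "p = \<pi> ! (k - 3) + 1 \<or> p = \<pi> ! (k - 3) + 2" for p
    unfolding just_above_last_def last
  proof (intro conjI allI impI)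
    show "\<pi> ! (k - 3) < p"
      using p by auto
    fix i assume "i < length (take (k - 2) \<pi>) - 1"
    then have i: "i < k - 3"
      using assms(1,2) by simp
    then have "\<pi> ! i \<notin> {\<pi> ! (k - 3), \<pi> ! (k - 3) + 1, \<pi> ! (k - 3) + 2}"
      using neq[OF i, of "k - 3"] neq[OF i, of "k - 2"] neq[OF i, of "k - 1"] assms(1,4,5) by auto
    then show "take (k - 2) \<pi> ! i \<noteq> p"
      and "take (k - 2) \<pi> ! i < \<pi> ! (k - 3) \<longleftrightarrow> take (k - 2) \<pi> ! i < p"
      using i p by auto
  qed
  then show "just_above_last (take (k - 2) \<pi>) (\<pi> ! (k - 2))"
    and "just_above_last (take (k - 2) \<pi>) (\<pi> ! (k - 1))"
    using assms(4,5) by simp_all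
qed

theorem theorem1p3:
  fixes \<pi> :: "nat list" and k :: nat
  assumes "k \<ge> 3" and "length \<pi> = k" and "is_perm \<pi>"
    and "\<pi> ! (k - 1) = \<pi> ! (k - 2) + 1" and "\<pi> ! (k - 2) = \<pi> ! (k - 3) + 1"
  shows "\<forall>n. num_avoiders n {[2,1,3], \<pi>}
           = num_avoiders n {[2,1,3], take (k - 2) \<pi> @ [\<pi> ! (k - 1), \<pi> ! (k - 2)]}"
proof
  fix n
  note split = perm_split_last_two[OF assms]
  have "take (k - 2) \<pi> \<noteq> []" "\<pi> ! (k - 2) \<noteq> \<pi> ! (k - 1)"
    using assms(1,2,4) by auto
  then show "num_avoiders n {[2,1,3], \<pi>}
      = num_avoiders n {[2,1,3], take (k - 2) \<pi> @ [\<pi> ! (k - 1), \<pi> ! (k - 2)]}"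
    using num_avoiders_swap_last_two[OF _ split(2,3)] split(1) by metis
qed

end
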